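(* Let $\mathcal T$ be an infinite set of positive integers and for each $t\in\mathcal T$ let $H_t$ be a triangle-free graph on $t$ vertices that is $d$-regular with $d=\Theta(t^{2/3})$ and all of whose eigenvalues other than the largest have absolute value $O(t^{1/3})$. Then for any choice of subgraphs $H'_t\subseteq H_t$ ($t\in\mathcal T$) with $|H'_t|=(1-o(1))|H_t|$, there are sets $U_t\subseteq V(H_t)$ with $|U_t|=o(t)$ such that $H'_t-U_t$ is connected and the cycle space $\mathcal C(H'_t-U_t)$ is spanned by cycles of length at most $11$ (asymptotics as $t\to\infty$ in $\mathcal T$).
   Context: $|H|$ denotes the number of edges. Eigenvalues are those of the adjacency matrix. $H'-U$ denotes the graph obtained from $H'$ by deleting the vertices in $U$. The cycle space $\mathcal C(G)$ of a graph $G$ is the subspace of the $\mathbb F_2$-vector space of edge subsets of $G$ generated by (the edge sets of) cycles of $G$. *)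

theory Defs
  imports Complex_Main "Jordan_Normal_Form.Char_Poly" "HOL-Computational_Algebra.Polynomial"
    "HOL-Library.Multiset"
begin

definition simple_graph :: "'a set \<Rightarrow> 'a set set \<Rightarrow> bool" where
  "simple_graph V E \<longleftrightarrow> finite V \<and> (\<forall>e\<in>E. \<exists>u v. e = {u, v} \<and> u \<noteq> v \<and> u \<in> V \<and> v \<in> V)"

definition degree :: "'a set set \<Rightarrow> 'a \<Rightarrow> nat" where
  "degree E v = card {e\<in>E. v \<in> e}"

definition regular :: "'a set \<Rightarrow> 'a set set \<Rightarrow> nat \<Rightarrow> bool" where
  "regular V E d \<longleftrightarrow> (\<forall>v\<in>V. degree E v = d)"

definition triangle_free :: "'a set set \<Rightarrow> bool" where
  "triangle_free E \<longleftrightarrow> \<not> (\<exists>a b c. {a,b} \<in> E \<and> {b,c} \<in> E \<and> {a,c} \<in> E \<and> a \<noteq> b \<and> b \<noteq> c \<and> a \<noteq> c)"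

definition adj_matrix :: "nat \<Rightarrow> nat set set \<Rightarrow> real mat" where
  "adj_matrix n E = mat n n (\<lambda>(i,j). if {i,j} \<in> E then 1 else 0)"

definition adj_eigenvalues :: "nat \<Rightarrow> nat set set \<Rightarrow> complex multiset" where
  "adj_eigenvalues n E = proots (char_poly (map_mat complex_of_real (adj_matrix n E)))"

definition is_walk :: "'a set set \<Rightarrow> 'a list \<Rightarrow> bool" where
  "is_walk E xs \<longleftrightarrow> xs \<noteq> [] \<and> (\<forall>i. Suc i < length xs \<longrightarrow> {xs ! i, xs ! Suc i} \<in> E)"

definition connected_graph :: "'a set \<Rightarrow> 'a set set \<Rightarrow> bool" where
  "connected_graph V E \<longleftrightarrow> (\<forall>u\<in>V. \<forall>v\<in>V. \<exists>xs. is_walk E xs \<and> hd xs = u \<and> last xs = v)"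

definition is_cycle :: "'a set set \<Rightarrow> 'a list \<Rightarrow> bool" where
  "is_cycle E xs \<longleftrightarrow> length xs \<ge> 3 \<and> distinct xs \<and>
     (\<forall>i<length xs. {xs ! i, xs ! ((Suc i) mod length xs)} \<in> E)"

definition cycle_edges :: "'a list \<Rightarrow> 'a set set" where
  "cycle_edges xs = {{xs ! i, xs ! ((Suc i) mod length xs)} | i. i < length xs}"

text \<open>F_2-span of a family of edge sets (addition = symmetric difference).\<close>
inductive_set f2_span :: "'a set set set \<Rightarrow> 'a set set set" for S where
  zero: "{} \<in> f2_span S"
| add: "X \<in> f2_span S \<Longrightarrow> C \<in> S \<Longrightarrow> (X - C) \<union> (C - X) \<in> f2_span S"

definition cycle_space :: "'a set set \<Rightarrow> 'a set set set" where
  "cycle_space E = f2_span {cycle_edges xs | xs. is_cycle E xs}"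

definition short_cycle_span :: "nat \<Rightarrow> 'a set set \<Rightarrow> 'a set set set" where
  "short_cycle_span k E = f2_span {cycle_edges xs | xs. is_cycle E xs \<and> length xs \<le> k}"

definition del_vertices_V :: "'a set \<Rightarrow> 'a set \<Rightarrow> 'a set" where
  "del_vertices_V V U = V - U"
definition del_vertices_E :: "'a set set \<Rightarrow> 'a set \<Rightarrow> 'a set set" where
  "del_vertices_E E U = {e\<in>E. e \<inter> U = {}}"

definition along :: "nat set \<Rightarrow> nat filter" where
  "along T = inf sequentially (principal T)"

end

(*
  Fix a root r and delete the set U of vertices at distance more than two from r in H'.  Every
  remaining vertex is joined to r by a path of length at most two avoiding U, so H' - U is
  connected, and these root paths form a spanning tree of depth two whose fundamental cycles
  have length at most 5; the fundamental cycles span the cycle space.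

  It remains to choose r with |U| = o(t).  The trace of A^4 counts closed walks of length four,
  so the eigenvalue bound gives  sum_{u,v} codeg(u,v)^2 <= d^4 + O(t^(7/3)), i.e. for a typical
  root r the codegrees codeg(r,y) stay close to their mean d^2/t ~ t^(1/3) in l^2.  By
  Cauchy-Schwarz, a vertex y outside the ball then contributes about d^2/t walks r-u-y of H that
  must all use one of the o(t d) deleted edges; averaging over r bounds both error terms at once.
*)
theory Submission
  imports Defs "Jordan_Normal_Form.Schur_Decomposition" "HOL-Analysis.Convex" "HOL-Real_Asymp.Real_Asymp"
begin

section \<open>Traces of powers and eigenvalues\<close>

lemma upper_triangular_mult:
  fixes A B :: "'a::semiring_0 mat"
  assumes A: "A \<in> carrier_mat n n" and B: "B \<in> carrier_mat n n"
    and uA: "upper_triangular A" and uB: "upper_triangular B"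
  shows "upper_triangular (A * B)"
    and "i < n \<Longrightarrow> (A * B) $$ (i, i) = A $$ (i, i) * B $$ (i, i)"
proof -
  have entry: "(A * B) $$ (i, j) = (\<Sum>k<n. A $$ (i, k) * B $$ (k, j))" if "i < n" "j < n" for i j
    using A B that by (auto simp: scalar_prod_def simp flip: atLeast0LessThan)
  have vanish: "A $$ (i, k) * B $$ (k, j) = 0" if "i < n" "k < n" "\<not> (i \<le> k \<and> k \<le> j)" for i j k
  proof (cases "k < i")
    case True then show ?thesis using upper_triangularD[OF uA True] A that by simp
  next
    case False
    then have "j < k" using that by simp
    then show ?thesis using upper_triangularD[OF uB] B that by simp
  qed
  show "upper_triangular (A * B)"
  proof (rule upper_triangularI)
    fix i j assume "j < i" "i < dim_row (A * B)"
    then show "(A * B) $$ (i, j) = 0"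
      using A vanish by (auto simp: entry intro!: sum.neutral)
  qed
  assume i: "i < n"
  have "(\<Sum>k<n. A $$ (i, k) * B $$ (k, i)) = A $$ (i, i) * B $$ (i, i)"
    using i vanish by (subst sum.remove[of _ i]) (auto intro!: sum.neutral)
  then show "(A * B) $$ (i, i) = A $$ (i, i) * B $$ (i, i)"
    using i by (simp add: entry)
qed

lemma upper_triangular_pow:
  fixes A :: "'a::comm_semiring_1 mat"
  assumes A: "A \<in> carrier_mat n n" and uA: "upper_triangular A"
  shows "upper_triangular (A ^\<^sub>m k) \<and> (\<forall>i<n. (A ^\<^sub>m k) $$ (i, i) = A $$ (i, i) ^ k)"
proof (induction k)
  case 0
  then show ?case using A by auto
next
  case (Suc k)
  then show ?case
    using upper_triangular_mult[OF pow_carrier_mat[OF A] A _ uA] by (simp add: mult.commute)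
qed

lemma trace_similar_mat_wit:
  fixes A :: "'a::comm_ring_1 mat"
  assumes "similar_mat_wit A B P Q" and A: "A \<in> carrier_mat n n"
  shows "(\<Sum>i<n. A $$ (i, i)) = (\<Sum>i<n. B $$ (i, i))"
proof -
  note wit = similar_mat_witD2[OF A assms(1)]
  have B: "B \<in> carrier_mat n n" and P: "P \<in> carrier_mat n n" and Q: "Q \<in> carrier_mat n n"
    and QP: "Q * P = 1\<^sub>m n" using wit by auto
  have AB: "A = P * (B * Q)" using wit(3) B P Q by (simp add: assoc_mult_mat[of _ n n _ n _ n])
  have trace_comm: "(\<Sum>i<n. (X * Y) $$ (i, i)) = (\<Sum>i<n. (Y * X) $$ (i, i))"
    if "X \<in> carrier_mat n n" "Y \<in> carrier_mat n n" for X Y :: "'a mat"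
  proof -
    have "(\<Sum>i<n. (X * Y) $$ (i, i)) = (\<Sum>i<n. \<Sum>j<n. X $$ (i, j) * Y $$ (j, i))"
      using that by (auto simp: scalar_prod_def intro!: sum.cong simp flip: atLeast0LessThan)
    also have "\<dots> = (\<Sum>j<n. \<Sum>i<n. Y $$ (j, i) * X $$ (i, j))"
      by (subst sum.swap) (simp add: mult.commute)
    also have "\<dots> = (\<Sum>i<n. (Y * X) $$ (i, i))"
      using that by (auto simp: scalar_prod_def intro!: sum.cong simp flip: atLeast0LessThan)
    finally show ?thesis .
  qed
  have "(B * Q) * P = B" using B P Q QP by (simp add: assoc_mult_mat[of _ n n _ n _ n])
  then show ?thesis using trace_comm[OF P, of "B * Q"] B Q AB by simp
qed

lemma proots_prod_linear_factors: "proots (\<Prod>a\<leftarrow>as. [:- a, 1:]) = mset (as :: 'a::idom list)"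
proof (induction as)
  case (Cons a as)
  have "(\<Prod>a\<leftarrow>as. [:- a, 1:]) \<noteq> 0" by (auto simp: prod_list_zero_iff)
  then show ?case using Cons by (simp add: proots_mult del: mult_pCons_left)
qed simp

lemma size_proots_char_poly:
  fixes A :: "complex mat"
  assumes "A \<in> carrier_mat n n"
  shows "size (proots (char_poly A)) = n"
  using char_poly_factorized[OF assms] by (auto simp: proots_prod_linear_factors)

lemma trace_pow_eq_sum_proots_char_poly:
  fixes A :: "complex mat"
  assumes A: "A \<in> carrier_mat n n"
  shows "(\<Sum>i<n. (A ^\<^sub>m k) $$ (i, i)) = (\<Sum>\<mu>\<in>#proots (char_poly A). \<mu> ^ k)"
proof -
  obtain as where cp: "char_poly A = (\<Prod>a\<leftarrow>as. [:- a, 1:])" and len: "length as = n"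
    using char_poly_factorized[OF A] by blast
  obtain B P Q where "schur_decomposition A as = (B, P, Q)"
    by (cases "schur_decomposition A as") auto
  from schur_decomposition[OF A cp this] have sim: "similar_mat_wit A B P Q"
    and ut: "upper_triangular B" and dg: "diag_mat B = as" by auto
  have B: "B \<in> carrier_mat n n" using similar_mat_witD2[OF A sim] by auto
  have "(\<Sum>i<n. (A ^\<^sub>m k) $$ (i, i)) = (\<Sum>i<n. (B ^\<^sub>m k) $$ (i, i))"
    using trace_similar_mat_wit[OF similar_mat_wit_pow[OF sim]] A by simp
  also have "\<dots> = (\<Sum>i<n. (as ! i) ^ k)"
    using upper_triangular_pow[OF B ut] dg[symmetric] B by (simp add: diag_mat_def)
  also have "\<dots> = (\<Sum>\<mu>\<in>#mset as. \<mu> ^ k)"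
    by (simp add: sum_mset_sum_list sum_list_sum_nth len atLeast0LessThan flip: mset_map)
  finally show ?thesis by (simp add: cp proots_prod_linear_factors)
qed

lemma norm_proot_char_poly_le_row_sum:
  fixes M :: "complex mat"
  assumes M: "M \<in> carrier_mat n n"
    and rows: "\<And>i. i < n \<Longrightarrow> (\<Sum>j<n. cmod (M $$ (i, j))) \<le> D"
    and mu: "\<mu> \<in># proots (char_poly M)"
  shows "cmod \<mu> \<le> D"
proof -
  have "char_poly M \<noteq> 0" using degree_monic_char_poly[OF M] by auto
  then have "eigenvalue M \<mu>" using mu eigenvalue_root_char_poly[OF M] by simp
  then obtain v where "eigenvector M v \<mu>" unfolding eigenvalue_def by blast
  then have v: "v \<in> carrier_vec n" and v0: "v \<noteq> 0\<^sub>v n" and Mv: "M *\<^sub>v v = \<mu> \<cdot>\<^sub>v v"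
    using M unfolding eigenvector_def by auto
  obtain k where k: "k < n" "v $ k \<noteq> 0"
    using v v0 by (metis eq_vecI carrier_vecD index_zero_vec(1,2))
  define m where "m = Max ((\<lambda>j. cmod (v $ j)) ` {..<n})"
  have "m \<in> (\<lambda>j. cmod (v $ j)) ` {..<n}" unfolding m_def using k(1) by (intro Max_in) auto
  then obtain i where i: "i < n" and im: "cmod (v $ i) = m" by auto
  have max: "cmod (v $ j) \<le> cmod (v $ i)" if "j < n" for j
    unfolding im m_def using that by (intro Max_ge) auto
  have pos: "cmod (v $ i) > 0" using max[OF k(1)] k(2) by auto
  have "\<mu> * v $ i = (M *\<^sub>v v) $ i" using Mv i v by simp
  also have "\<dots> = (\<Sum>j<n. M $$ (i, j) * v $ j)"
    using M v i by (auto simp: mult_mat_vec_def scalar_prod_def atLeast0LessThan)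
  finally have "\<mu> * v $ i = (\<Sum>j<n. M $$ (i, j) * v $ j)" .
  then have "cmod \<mu> * cmod (v $ i) = cmod (\<Sum>j<n. M $$ (i, j) * v $ j)" by (metis norm_mult)
  also have "\<dots> \<le> (\<Sum>j<n. cmod (M $$ (i, j)) * cmod (v $ j))"
    by (rule order.trans[OF norm_sum]) (simp add: norm_mult)
  also have "\<dots> \<le> (\<Sum>j<n. cmod (M $$ (i, j))) * cmod (v $ i)"
    unfolding sum_distrib_right by (rule sum_mono) (simp add: mult_left_mono max)
  also have "\<dots> \<le> D * cmod (v $ i)" using rows[OF i] pos by (simp add: mult_right_mono)
  finally show ?thesis using pos by simp
qed

lemma norm_sum_mset_power_le:
  fixes R :: "'a::real_normed_field multiset"
  assumes "\<And>\<mu>. \<mu> \<in># R \<Longrightarrow> norm \<mu> \<le> c"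
  shows "norm (\<Sum>\<mu>\<in>#R. \<mu> ^ k) \<le> real (size R) * c ^ k"
  using assms
proof (induction R)
  case (add x R)
  have "norm (x ^ k) \<le> c ^ k"
    unfolding norm_power using add.prems by (intro power_mono) auto
  then show ?case using add by (auto intro: order.trans[OF norm_triangle_ineq] simp: algebra_simps)
qed simp

section \<open>Degrees and codegrees\<close>

lemma simple_graph_subset: "simple_graph V E \<Longrightarrow> E' \<subseteq> E \<Longrightarrow> simple_graph V E'"
  unfolding simple_graph_def by blast

lemma simple_graph_edge_subset: "simple_graph V E \<Longrightarrow> e \<in> E \<Longrightarrow> e \<subseteq> V"
  unfolding simple_graph_def by fastforce

lemma simple_graph_finite_edges:
  assumes "simple_graph V E" shows "finite E"
proof -
  have "E \<subseteq> Pow V" using simple_graph_edge_subset[OF assms] by blast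
  then show ?thesis using assms unfolding simple_graph_def by (metis finite_Pow_iff finite_subset)
qed

definition edge_ind :: "'a set set \<Rightarrow> 'a \<Rightarrow> 'a \<Rightarrow> real" where
  "edge_ind E u v = of_bool ({u, v} \<in> E)"

definition codegree :: "nat \<Rightarrow> nat set set \<Rightarrow> nat \<Rightarrow> nat \<Rightarrow> real" where
  "codegree n E u v = (\<Sum>w<n. edge_ind E u w * edge_ind E w v)"

lemma edge_ind_commute: "edge_ind E u v = edge_ind E v u"
  by (simp add: edge_ind_def insert_commute)

lemma edge_ind_nonneg [simp]: "edge_ind E u v \<ge> 0"
  by (simp add: edge_ind_def)

lemma codegree_commute: "codegree n E u v = codegree n E v u"
  unfolding codegree_def by (simp add: edge_ind_commute mult.commute)

lemma real_degree_eq_sum: "finite E \<Longrightarrow> real (degree E u) = (\<Sum>e\<in>E. of_bool (u \<in> e))"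
  by (simp add: degree_def Int_def)

lemma sum_edge_ind_eq_degree:
  fixes E :: "nat set set"
  assumes E: "simple_graph {0..<n} E"
  shows "(\<Sum>v<n. edge_ind E u v) = real (degree E u)"
proof -
  have "bij_betw (\<lambda>v. {u, v}) ({..<n} \<inter> {v. {u, v} \<in> E}) (E \<inter> {e. u \<in> e})"
  proof (rule bij_betw_imageI)
    show "inj_on (\<lambda>v. {u, v}) ({..<n} \<inter> {v. {u, v} \<in> E})"
      by (rule inj_onI) (metis doubleton_eq_iff)
    have "e \<in> (\<lambda>v. {u, v}) ` ({..<n} \<inter> {v. {u, v} \<in> E})" if "e \<in> E" "u \<in> e" for e
    proof -
      obtain a b where "e = {a, b}" "a < n" "b < n"
        using E \<open>e \<in> E\<close> unfolding simple_graph_def by auto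
      then show ?thesis using that by (auto simp: insert_commute)
    qed
    then show "(\<lambda>v. {u, v}) ` ({..<n} \<inter> {v. {u, v} \<in> E}) = E \<inter> {e. u \<in> e}" by auto
  qed
  then have "card ({..<n} \<inter> {v. {u, v} \<in> E}) = degree E u"
    by (simp add: degree_def Int_def bij_betw_same_card)
  moreover have "(\<Sum>v<n. edge_ind E u v) = real (card ({..<n} \<inter> {v. {u, v} \<in> E}))"
    unfolding edge_ind_def by (rule sum_of_bool_eq) simp_all
  ultimately show ?thesis by simp
qed

lemma sum_degree_eq_twice_card:
  fixes E :: "nat set set"
  assumes E: "simple_graph {0..<n} E"
  shows "(\<Sum>u<n. real (degree E u)) = 2 * real (card E)"
proof -
  have "(\<Sum>u<n. real (degree E u)) = (\<Sum>u<n. \<Sum>e\<in>E. of_bool (u \<in> e))"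
    by (simp only: real_degree_eq_sum[OF simple_graph_finite_edges[OF E]])
  also have "\<dots> = (\<Sum>e\<in>E. \<Sum>u<n. of_bool (u \<in> e))" by (rule sum.swap)
  also have "\<dots> = (\<Sum>e\<in>E. 2)"
  proof (rule sum.cong[OF refl])
    fix e assume "e \<in> E"
    then obtain a b where "e = {a, b}" "a \<noteq> b" "a < n" "b < n"
      using E unfolding simple_graph_def by auto
    then have "{..<n} \<inter> {u. u \<in> e} = {a, b}" by auto
    moreover have "(\<Sum>u<n. of_bool (u \<in> e)) = real (card ({..<n} \<inter> {u. u \<in> e}))"
      by (rule sum_of_bool_eq) simp_all
    ultimately show "(\<Sum>u<n. of_bool (u \<in> e)) = (2::real)" using \<open>a \<noteq> b\<close> by simp
  qed
  finally show ?thesis by simp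
qed

lemma card_edges_if_regular:
  fixes E :: "nat set set"
  assumes "simple_graph {0..<n} E" and "regular {0..<n} E d"
  shows "2 * real (card E) = real n * real d"
  using sum_degree_eq_twice_card[OF assms(1)] assms(2) by (simp add: regular_def atLeast0LessThan)

lemma sum_codegree_eq_degree_sq:
  assumes E: "simple_graph {0..<n} E" and reg: "regular {0..<n} E d" and u: "u < n"
  shows "(\<Sum>v<n. codegree n E u v) = real d ^ 2"
proof -
  have deg: "(\<Sum>v<n. edge_ind E w v) = real d" if "w < n" for w
    using sum_edge_ind_eq_degree[OF E] reg that by (simp add: regular_def)
  have "(\<Sum>v<n. codegree n E u v) = (\<Sum>w<n. edge_ind E u w * (\<Sum>v<n. edge_ind E w v))"
    unfolding codegree_def sum_distrib_left by (rule sum.swap)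
  also have "\<dots> = (\<Sum>w<n. edge_ind E u w) * real d"
    by (simp add: deg sum_distrib_right)
  finally show ?thesis using deg[OF u] by (simp add: power2_eq_square)
qed

lemma adj_matrix_pow4_diag:
  assumes i: "i < n"
  shows "(map_mat complex_of_real (adj_matrix n E) ^\<^sub>m 4) $$ (i, i)
    = complex_of_real (\<Sum>j<n. codegree n E i j ^ 2)"
proof -
  define A where "A = map_mat complex_of_real (adj_matrix n E)"
  have A: "A \<in> carrier_mat n n" unfolding A_def adj_matrix_def by auto
  have entry: "A $$ (p, q) = complex_of_real (edge_ind E p q)" if "p < n" "q < n" for p q
    using that by (simp add: A_def adj_matrix_def edge_ind_def)
  have sq: "(A * A) $$ (p, q) = complex_of_real (codegree n E p q)" if "p < n" "q < n" for p q
  proof -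
    have "(A * A) $$ (p, q) = (\<Sum>w<n. A $$ (p, w) * A $$ (w, q))"
      using that A by (simp add: scalar_prod_def atLeast0LessThan)
    then show ?thesis using that by (simp add: entry codegree_def)
  qed
  have "A ^\<^sub>m 4 = (A * A) * (A * A)"
    using A by (simp add: numeral_eq_Suc assoc_mult_mat[of _ n n _ n _ n])
  then have "(A ^\<^sub>m 4) $$ (i, i) = (\<Sum>j<n. (A * A) $$ (i, j) * (A * A) $$ (j, i))"
    using A i by (simp add: scalar_prod_def atLeast0LessThan)
  also have "\<dots> = complex_of_real (\<Sum>j<n. codegree n E i j ^ 2)"
    using i by (simp add: sq codegree_commute[of n E _ i] power2_eq_square)
  finally show ?thesis unfolding A_def .
qed

lemma sum_codegree_sq_le:
  fixes E :: "nat set set"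
  assumes E: "simple_graph {0..<n} E" and reg: "regular {0..<n} E d"
    and lam_mem: "lam \<in># adj_eigenvalues n E"
    and rest: "\<And>\<mu>. \<mu> \<in># adj_eigenvalues n E - {#lam#} \<Longrightarrow> cmod \<mu> \<le> c"
  shows "(\<Sum>u<n. \<Sum>v<n. codegree n E u v ^ 2) \<le> real d ^ 4 + real n * c ^ 4"
proof -
  define A where "A = map_mat complex_of_real (adj_matrix n E)"
  define R where "R = adj_eigenvalues n E - {#lam#}"
  have A: "A \<in> carrier_mat n n" unfolding A_def adj_matrix_def by auto
  have eigs: "proots (char_poly A) = add_mset lam R"
    using lam_mem unfolding R_def adj_eigenvalues_def A_def by simp
  have "complex_of_real (\<Sum>u<n. \<Sum>v<n. codegree n E u v ^ 2) = (\<Sum>u<n. (A ^\<^sub>m 4) $$ (u, u))"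
    by (simp add: A_def adj_matrix_pow4_diag)
  also have "\<dots> = lam ^ 4 + (\<Sum>\<mu>\<in>#R. \<mu> ^ 4)"
    by (simp add: trace_pow_eq_sum_proots_char_poly[OF A] eigs)
  finally have trace: "complex_of_real (\<Sum>u<n. \<Sum>v<n. codegree n E u v ^ 2) = lam ^ 4 + (\<Sum>\<mu>\<in>#R. \<mu> ^ 4)" .
  have "(\<Sum>v<n. cmod (A $$ (u, v))) = real d" if "u < n" for u
  proof -
    have "(\<Sum>v<n. cmod (A $$ (u, v))) = (\<Sum>v<n. edge_ind E u v)"
      using that by (intro sum.cong) (simp_all add: A_def adj_matrix_def edge_ind_def)
    then show ?thesis using that reg sum_edge_ind_eq_degree[OF E, of u] by (simp add: regular_def)
  qed
  then have "cmod lam \<le> real d"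
    using norm_proot_char_poly_le_row_sum[OF A] eigs by simp
  then have main: "cmod (lam ^ 4) \<le> real d ^ 4"
    unfolding norm_power by (intro power_mono) simp_all
  have "size R \<le> n"
    using size_proots_char_poly[OF A] eigs by simp
  moreover have "cmod (\<Sum>\<mu>\<in>#R. \<mu> ^ 4) \<le> real (size R) * c ^ 4"
    using norm_sum_mset_power_le[of R c 4] rest unfolding R_def by blast
  ultimately have others: "cmod (\<Sum>\<mu>\<in>#R. \<mu> ^ 4) \<le> real n * c ^ 4"
    by (meson order.trans mult_right_mono of_nat_mono zero_le_even_power even_numeral)
  have "(\<Sum>u<n. \<Sum>v<n. codegree n E u v ^ 2) = Re (complex_of_real (\<Sum>u<n. \<Sum>v<n. codegree n E u v ^ 2))"
    by (simp only: Re_complex_of_real)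
  also have "\<dots> \<le> cmod (lam ^ 4) + cmod (\<Sum>\<mu>\<in>#R. \<mu> ^ 4)"
    unfolding trace by (rule order.trans[OF complex_Re_le_cmod norm_triangle_ineq])
  finally show ?thesis using main others by linarith
qed

section \<open>Cycle spaces over GF(2)\<close>

lemma f2_span_sym_diff:
  assumes X: "X \<in> f2_span S" and Y: "Y \<in> f2_span S"
  shows "sym_diff X Y \<in> f2_span S"
  using Y
proof (induction Y rule: f2_span.induct)
  case zero
  then show ?case using X by simp
next
  case (add Y C)
  have "sym_diff X (sym_diff Y C) = sym_diff (sym_diff X Y) C" by blast
  then show ?case using f2_span.add[OF add.IH add.hyps(2)] by simp
qed

lemma f2_span_base: "C \<in> S \<Longrightarrow> C \<in> f2_span S"
  using f2_span.add[OF f2_span.zero] by fastforce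

lemma f2_span_subset:
  assumes "X \<in> f2_span S" and "\<And>C. C \<in> S \<Longrightarrow> C \<in> f2_span S'"
  shows "X \<in> f2_span S'"
  using assms(1)
proof (induction rule: f2_span.induct)
  case (add X C)
  then show ?case using f2_span_sym_diff[OF _ assms(2)] by simp
qed (rule f2_span.zero)

lemma f2_span_odd_sum:
  fixes c :: "nat \<Rightarrow> 'a set \<Rightarrow> nat"
  assumes "\<forall>i<k. {e. odd (c i e)} \<in> f2_span S"
  shows "{e. odd (\<Sum>i<k. c i e)} \<in> f2_span S"
  using assms
proof (induction k)
  case 0
  then show ?case by (simp add: f2_span.zero)
next
  case (Suc k)
  have "{e. odd (\<Sum>i<Suc k. c i e)} = sym_diff {e. odd (\<Sum>i<k. c i e)} {e. odd (c k e)}"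
    by auto
  then show ?case using Suc f2_span_sym_diff[of "{e. odd (\<Sum>i<k. c i e)}" S] by simp
qed

lemma sum_Suc_mod:
  fixes f :: "nat \<Rightarrow> 'a::comm_monoid_add"
  assumes "k > 0"
  shows "(\<Sum>i<k. f (Suc i mod k)) = (\<Sum>i<k. f i)"
proof -
  obtain k' where k': "k = Suc k'" using assms by (cases k) auto
  have "(\<Sum>i<k. f (Suc i mod k)) = (\<Sum>i<k'. f (Suc i)) + f 0"
    unfolding k' lessThan_Suc by (simp add: add.commute)
  also have "\<dots> = (\<Sum>i<k. f i)"
    unfolding k' sum.lessThan_Suc_shift by (simp add: add.commute)
  finally show ?thesis .
qed

lemma cycle_edges_image: "cycle_edges xs = (\<lambda>i. {xs ! i, xs ! (Suc i mod length xs)}) ` {..<length xs}"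
  unfolding cycle_edges_def by blast

lemma cycle_edge_index_inj:
  assumes cyc: "is_cycle E xs" and i: "i < length xs" and j: "j < length xs"
    and eq: "{xs ! i, xs ! (Suc i mod length xs)} = {xs ! j, xs ! (Suc j mod length xs)}"
  shows "i = j"
proof (rule ccontr)
  assume "i \<noteq> j"
  let ?k = "length xs"
  have dist: "distinct xs" and k3: "3 \<le> ?k" using cyc unfolding is_cycle_def by auto
  have succ: "Suc i mod ?k < ?k" "Suc j mod ?k < ?k" using k3 by (auto intro: mod_less_divisor)
  have "xs ! i \<noteq> xs ! j" using \<open>i \<noteq> j\<close> nth_eq_iff_index_eq[OF dist i j] by blast
  then have "xs ! i = xs ! (Suc j mod ?k)" and "xs ! (Suc i mod ?k) = xs ! j"
    using eq by (auto simp: doubleton_eq_iff)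
  then have ij: "i = Suc j mod ?k" and ji: "j = Suc i mod ?k"
    using nth_eq_iff_index_eq[OF dist] i j succ by auto
  have "i = Suc (Suc i) mod ?k" using ij ji by (simp add: mod_Suc_eq)
  then show False using i k3 by (simp add: mod_if split: if_splits)
qed

lemma odd_count_cycle_edge_iff:
  assumes cyc: "is_cycle E xs"
  shows "odd (\<Sum>i<length xs. of_bool (e = {xs ! i, xs ! (Suc i mod length xs)}) :: nat)
    \<longleftrightarrow> e \<in> cycle_edges xs"
proof -
  define I where "I = {..<length xs} \<inter> {i. e = {xs ! i, xs ! (Suc i mod length xs)}}"
  have count: "(\<Sum>i<length xs. of_bool (e = {xs ! i, xs ! (Suc i mod length xs)}) :: nat) = card I"
    unfolding I_def by (subst sum_of_bool_eq) simp_all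
  show ?thesis
  proof (cases "e \<in> cycle_edges xs")
    case True
    then obtain j where j: "j < length xs" "e = {xs ! j, xs ! (Suc j mod length xs)}"
      unfolding cycle_edges_def by blast
    then have "I = {j}" using cycle_edge_index_inj[OF cyc] unfolding I_def by auto
    then show ?thesis using count True by simp
  next
    case False
    then have "I = {}" unfolding I_def cycle_edges_def by blast
    then show ?thesis using count False by simp
  qed
qed

lemma is_cycle_small:
  "distinct [a, b, c] \<Longrightarrow> {a, b} \<in> E \<Longrightarrow> {b, c} \<in> E \<Longrightarrow> {c, a} \<in> E \<Longrightarrow> is_cycle E [a, b, c]"
  "distinct [a, b, c, d] \<Longrightarrow> {a, b} \<in> E \<Longrightarrow> {b, c} \<in> E \<Longrightarrow> {c, d} \<in> E \<Longrightarrow> {d, a} \<in> E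
    \<Longrightarrow> is_cycle E [a, b, c, d]"
  "distinct [a, b, c, d, f] \<Longrightarrow> {a, b} \<in> E \<Longrightarrow> {b, c} \<in> E \<Longrightarrow> {c, d} \<in> E \<Longrightarrow> {d, f} \<in> E
    \<Longrightarrow> {f, a} \<in> E \<Longrightarrow> is_cycle E [a, b, c, d, f]"
  unfolding is_cycle_def by (simp_all add: All_less_Suc)

lemma cycle_edges_small:
  "cycle_edges [a, b, c] = {{a, b}, {b, c}, {c, a}}"
  "cycle_edges [a, b, c, d] = {{a, b}, {b, c}, {c, d}, {d, a}}"
  "cycle_edges [a, b, c, d, f] = {{a, b}, {b, c}, {c, d}, {d, f}, {f, a}}"
  unfolding cycle_edges_image by (simp_all add: lessThan_Suc insert_commute)

lemma cycle_in_short_cycle_span: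
  "is_cycle E xs \<Longrightarrow> length xs \<le> k \<Longrightarrow> cycle_edges xs \<in> short_cycle_span k E"
  unfolding short_cycle_span_def by (rule f2_span_base) blast

lemma is_walk_singleton [simp]: "is_walk E [x]"
  unfolding is_walk_def by simp

lemma is_walk_Cons_Cons [simp]: "is_walk E (x # y # xs) \<longleftrightarrow> {x, y} \<in> E \<and> is_walk E (y # xs)"
  by (auto simp: is_walk_def All_less_Suc2[symmetric] less_Suc_eq_0_disj)

lemma is_walk_append:
  "is_walk E (xs @ [x]) \<Longrightarrow> is_walk E (x # ys) \<Longrightarrow> is_walk E (xs @ x # ys)"
proof (induction xs)
  case (Cons a xs)
  then show ?case by (cases xs) auto
qed simp

section \<open>Graphs of radius two\<close>

definition within2 :: "'a set set \<Rightarrow> 'a \<Rightarrow> 'a \<Rightarrow> bool" where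
  "within2 E r y \<longleftrightarrow> y = r \<or> {r, y} \<in> E \<or> (\<exists>u. {r, u} \<in> E \<and> {u, y} \<in> E)"

definition root_path :: "'a set set \<Rightarrow> 'a \<Rightarrow> 'a \<Rightarrow> 'a set set" where
  "root_path E r y =
    (if y = r then {} else if {r, y} \<in> E then {{r, y}}
     else let u = SOME u. {r, u} \<in> E \<and> {u, y} \<in> E in {{r, u}, {u, y}})"

lemma root_path_cases:
  assumes "within2 E r y"
  obtains "y = r" "root_path E r y = {}"
  | "y \<noteq> r" "{r, y} \<in> E" "root_path E r y = {{r, y}}"
  | u where "y \<noteq> r" "{r, y} \<notin> E" "{r, u} \<in> E" "{u, y} \<in> E" "root_path E r y = {{r, u}, {u, y}}"
proof -
  consider "y = r" | "y \<noteq> r" "{r, y} \<in> E" | "y \<noteq> r" "{r, y} \<notin> E" by blast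
  then show thesis
  proof cases
    case 3
    define u where "u = (SOME u. {r, u} \<in> E \<and> {u, y} \<in> E)"
    have "\<exists>u. {r, u} \<in> E \<and> {u, y} \<in> E" using assms 3 unfolding within2_def by blast
    then have "{r, u} \<in> E \<and> {u, y} \<in> E" unfolding u_def by (rule someI_ex)
    moreover have "root_path E r y = {{r, u}, {u, y}}" using 3 by (simp add: root_path_def u_def Let_def)
    ultimately show thesis using that(3) 3 by blast
  qed (use that in \<open>simp_all add: root_path_def\<close>)
qed

text \<open>The root paths form a spanning tree of depth two: every \<open>y \<noteq> r\<close> hangs below \<open>r\<close> or below
  a neighbour of \<open>r\<close>.  The fundamental cycle of a tree edge is empty, that of any other edge has
  length at most 5.\<close>

definition fundamental_cycle :: "'a set set \<Rightarrow> 'a \<Rightarrow> 'a \<Rightarrow> 'a \<Rightarrow> 'a set set" where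
  "fundamental_cycle E r x y = sym_diff (sym_diff (root_path E r x) (root_path E r y)) {{x, y}}"

lemma fundamental_cycle_commute: "fundamental_cycle E r x y = fundamental_cycle E r y x"
  unfolding fundamental_cycle_def by (auto simp: insert_commute)

lemma simple_graph_edge_neq: "simple_graph V E \<Longrightarrow> {x, y} \<in> E \<Longrightarrow> x \<noteq> y"
  unfolding simple_graph_def by (metis doubleton_eq_iff)

lemma fundamental_cycle_root_edge: "{r, y} \<in> E \<Longrightarrow> y \<noteq> r \<Longrightarrow> fundamental_cycle E r r y = {}"
  by (simp add: fundamental_cycle_def root_path_def)

lemma fundamental_cycle_near_root:
  assumes G: "simple_graph V E" and R: "\<forall>v\<in>V. within2 E r v" and xy: "{x, y} \<in> E"
    and k: "5 \<le> k" and near: "x \<noteq> r" "{r, x} \<in> E"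
  shows "fundamental_cycle E r x y \<in> short_cycle_span k E"
proof -
  have neq: "a \<noteq> b" if "{a, b} \<in> E" for a b using simple_graph_edge_neq[OF G that] .
  have "y \<in> V" using simple_graph_edge_subset[OF G xy] by blast
  then have y: "within2 E r y" using R by blast
  have zero: "{} \<in> short_cycle_span k E" unfolding short_cycle_span_def by (rule f2_span.zero)
  have rx: "root_path E r x = {{r, x}}" using near by (simp add: root_path_def)
  from y show ?thesis
  proof (cases rule: root_path_cases)
    case 1
    then show ?thesis using rx zero by (auto simp: fundamental_cycle_def insert_commute)
  next
    case 2
    then have "fundamental_cycle E r x y = cycle_edges [r, x, y]"
      using rx near neq[OF xy] by (auto simp: fundamental_cycle_def cycle_edges_small doubleton_eq_iff)
    moreover have "is_cycle E [r, x, y]"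
      using 2 near xy neq[OF xy] by (intro is_cycle_small) (auto simp: insert_commute)
    ultimately show ?thesis using k by (simp add: cycle_in_short_cycle_span)
  next
    case (3 u)
    show ?thesis
    proof (cases "u = x")
      case True
      then have "fundamental_cycle E r x y = {}"
        using 3 rx by (auto simp: fundamental_cycle_def doubleton_eq_iff)
      then show ?thesis using zero by simp
    next
      case False
      have "r \<noteq> u" "u \<noteq> y" using neq 3 by auto
      then have "fundamental_cycle E r x y = cycle_edges [r, x, y, u]"
        using 3 rx near False neq[OF xy]
        by (auto simp: fundamental_cycle_def cycle_edges_small doubleton_eq_iff)
      moreover have "is_cycle E [r, x, y, u]"
        using 3 near False xy neq[OF xy] \<open>r \<noteq> u\<close> \<open>u \<noteq> y\<close>
        by (intro is_cycle_small) (auto simp: insert_commute)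
      ultimately show ?thesis using k by (simp add: cycle_in_short_cycle_span)
    qed
  qed
qed

lemma fundamental_cycle_far_from_root:
  assumes G: "simple_graph V E" and R: "\<forall>v\<in>V. within2 E r v" and xy: "{x, y} \<in> E"
    and k: "5 \<le> k" and far: "x \<noteq> r" "{r, x} \<notin> E" "y \<noteq> r" "{r, y} \<notin> E"
  shows "fundamental_cycle E r x y \<in> short_cycle_span k E"
proof -
  have neq: "a \<noteq> b" if "{a, b} \<in> E" for a b using simple_graph_edge_neq[OF G that] .
  have "x \<in> V" "y \<in> V" using simple_graph_edge_subset[OF G xy] by auto
  then have x: "within2 E r x" and y: "within2 E r y" using R by auto
  from x obtain u where u: "{r, u} \<in> E" "{u, x} \<in> E" "root_path E r x = {{r, u}, {u, x}}"
    by (cases rule: root_path_cases) (use far in auto)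
  from y obtain w where w: "{r, w} \<in> E" "{w, y} \<in> E" "root_path E r y = {{r, w}, {w, y}}"
    by (cases rule: root_path_cases) (use far in auto)
  have d: "r \<noteq> u" "u \<noteq> x" "r \<noteq> w" "w \<noteq> y" "u \<noteq> y" "w \<noteq> x" "x \<noteq> y"
    using neq u w far xy by auto
  show ?thesis
  proof (cases "u = w")
    case True
    have "fundamental_cycle E r x y = cycle_edges [u, x, y]"
      unfolding fundamental_cycle_def u(3) w(3) cycle_edges_small
      using d True far by (auto simp: doubleton_eq_iff insert_commute)
    moreover have "is_cycle E [u, x, y]"
      using u w xy d True by (intro is_cycle_small) (auto simp: insert_commute)
    ultimately show ?thesis using k by (simp add: cycle_in_short_cycle_span)
  next
    case False
    have "fundamental_cycle E r x y = cycle_edges [r, u, x, y, w]"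
      unfolding fundamental_cycle_def u(3) w(3) cycle_edges_small
      using d False far by (auto simp: doubleton_eq_iff insert_commute)
    moreover have "is_cycle E [r, u, x, y, w]"
      using u w xy far d False by (intro is_cycle_small) (auto simp: insert_commute)
    ultimately show ?thesis using k by (simp add: cycle_in_short_cycle_span)
  qed
qed

lemma fundamental_cycle_in_short_cycle_span:
  assumes G: "simple_graph V E" and R: "\<forall>v\<in>V. within2 E r v" and xy: "{x, y} \<in> E"
    and k: "5 \<le> k"
  shows "fundamental_cycle E r x y \<in> short_cycle_span k E"
proof -
  have yx: "{y, x} \<in> E" using xy by (simp add: insert_commute)
  have zero: "{} \<in> short_cycle_span k E" unfolding short_cycle_span_def by (rule f2_span.zero)
  have "x \<noteq> y" using simple_graph_edge_neq[OF G xy] .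
  consider "x = r" | "y = r" | "x \<noteq> r" "{r, x} \<in> E" | "y \<noteq> r" "{r, y} \<in> E"
    | "x \<noteq> r" "{r, x} \<notin> E" "y \<noteq> r" "{r, y} \<notin> E" by blast
  then show ?thesis
  proof cases
    case 1
    then show ?thesis using fundamental_cycle_root_edge[of r y E] xy \<open>x \<noteq> y\<close> zero by auto
  next
    case 2
    then show ?thesis using fundamental_cycle_root_edge[of r x E] yx \<open>x \<noteq> y\<close> zero
      by (auto simp: fundamental_cycle_commute)
  next
    case 4
    then show ?thesis
      using fundamental_cycle_near_root[OF G R yx k] by (simp add: fundamental_cycle_commute)
  qed (use fundamental_cycle_near_root[OF G R xy k] fundamental_cycle_far_from_root[OF G R xy k] in auto)
qed

text \<open>Summing the fundamental cycles of the edges of a cycle, every root path occurs twice and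
  cancels, so the sum is the cycle itself.\<close>

lemma cycle_edges_in_short_cycle_span:
  assumes G: "simple_graph V E" and R: "\<forall>v\<in>V. within2 E r v" and k: "5 \<le> k"
    and cyc: "is_cycle E xs"
  shows "cycle_edges xs \<in> short_cycle_span k E"
proof -
  define m where "m = length xs"
  define x where "x i = xs ! i" for i
  define x' where "x' i = xs ! (Suc i mod m)" for i
  define c :: "nat \<Rightarrow> 'a set \<Rightarrow> nat"
    where "c i e = of_bool (e \<in> root_path E r (x i)) + of_bool (e = {x i, x' i})
      + of_bool (e \<in> root_path E r (x' i))" for i e
  have "m > 0" using cyc unfolding is_cycle_def m_def by auto
  have "{e. odd (c i e)} = fundamental_cycle E r (x i) (x' i)" for i
    unfolding c_def fundamental_cycle_def by auto
  moreover have "{x i, x' i} \<in> E" if "i < m" for i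
    using cyc that unfolding is_cycle_def x_def x'_def m_def by auto
  ultimately have "{e. odd (\<Sum>i<m. c i e)} \<in> short_cycle_span k E"
    using fundamental_cycle_in_short_cycle_span[OF G R _ k] unfolding short_cycle_span_def
    by (intro f2_span_odd_sum) auto
  moreover have "(\<Sum>i<m. c i e) = 2 * (\<Sum>i<m. of_bool (e \<in> root_path E r (x i)))
      + (\<Sum>i<m. of_bool (e = {x i, x' i}))" for e
    using sum_Suc_mod[OF \<open>m > 0\<close>, of "\<lambda>j. of_bool (e \<in> root_path E r (xs ! j)) :: nat"]
    unfolding c_def x_def x'_def by (simp add: sum.distrib)
  ultimately show ?thesis
    using odd_count_cycle_edge_iff[OF cyc] unfolding x_def x'_def m_def by simp
qed

lemma cycle_space_eq_short_cycle_span: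
  assumes G: "simple_graph V E" and R: "\<forall>v\<in>V. within2 E r v" and k: "5 \<le> k"
  shows "cycle_space E = short_cycle_span k E"
proof
  show "cycle_space E \<subseteq> short_cycle_span k E"
  proof
    fix X assume "X \<in> cycle_space E"
    then show "X \<in> short_cycle_span k E"
      using cycle_edges_in_short_cycle_span[OF G R k] unfolding cycle_space_def short_cycle_span_def
      by (auto elim: f2_span_subset)
  qed
  show "short_cycle_span k E \<subseteq> cycle_space E"
    unfolding short_cycle_span_def cycle_space_def
    by (auto intro: f2_span_subset f2_span_base)
qed

lemma connected_graph_if_within2:
  assumes R: "\<forall>v\<in>V. within2 E r v"
  shows "connected_graph V E"
  unfolding connected_graph_def
proof (intro ballI)
  fix u v assume "u \<in> V" "v \<in> V"
  have "\<exists>xs. is_walk E (xs @ [r]) \<and> hd (xs @ [r]) = u"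
    using R \<open>u \<in> V\<close> unfolding within2_def
    by (metis append.left_neutral append_Cons insert_commute is_walk_Cons_Cons is_walk_singleton
        list.sel(1))
  then obtain xs where xs: "is_walk E (xs @ [r])" "hd (xs @ [r]) = u" by blast
  have "\<exists>ys. is_walk E (r # ys) \<and> last (r # ys) = v"
    using R \<open>v \<in> V\<close> unfolding within2_def
    by (metis is_walk_Cons_Cons is_walk_singleton last.simps list.distinct(1))
  then obtain ys where ys: "is_walk E (r # ys)" "last (r # ys) = v" by blast
  have "hd (xs @ r # ys) = u" using xs(2) by (cases xs) auto
  then show "\<exists>zs. is_walk E zs \<and> hd zs = u \<and> last zs = v"
    using is_walk_append[OF xs(1) ys(1)] ys(2) by auto
qed

definition ball2 :: "nat \<Rightarrow> nat set set \<Rightarrow> nat \<Rightarrow> nat set" where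
  "ball2 n E r = {y. y < n \<and> within2 E r y}"

lemma simple_graph_del_vertices:
  "simple_graph V E \<Longrightarrow> simple_graph (del_vertices_V V U) (del_vertices_E E U)"
  unfolding simple_graph_def del_vertices_V_def del_vertices_E_def by fastforce

lemma within2_del_vertices_outside_ball2:
  assumes E: "simple_graph {0..<n} E" and y: "y \<in> ball2 n E r"
  shows "within2 (del_vertices_E E ({0..<n} - ball2 n E r)) r y"
proof -
  have "v \<in> ball2 n E r" if "{r, v} \<in> E" for v
    using simple_graph_edge_subset[OF E that] that by (auto simp: ball2_def within2_def)
  moreover have "r \<in> ball2 n E r" if "{r, v} \<in> E" for v
    using simple_graph_edge_subset[OF E that] by (auto simp: ball2_def within2_def)
  ultimately show ?thesis
    using y unfolding ball2_def within2_def del_vertices_E_def by blast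
qed

lemma delete_outside_ball2:
  fixes E :: "nat set set" and r :: nat
  assumes E: "simple_graph {0..<n} E" and k: "5 \<le> k"
  defines "U \<equiv> {0..<n} - ball2 n E r"
  shows "connected_graph (del_vertices_V {0..<n} U) (del_vertices_E E U)"
    and "cycle_space (del_vertices_E E U) = short_cycle_span k (del_vertices_E E U)"
proof -
  have V: "del_vertices_V {0..<n} U = ball2 n E r"
    unfolding del_vertices_V_def U_def ball2_def by auto
  have R: "\<forall>y\<in>del_vertices_V {0..<n} U. within2 (del_vertices_E E U) r y"
    unfolding V unfolding U_def using within2_del_vertices_outside_ball2[OF E] by blast
  show "connected_graph (del_vertices_V {0..<n} U) (del_vertices_E E U)"
    by (rule connected_graph_if_within2[OF R])
  show "cycle_space (del_vertices_E E U) = short_cycle_span k (del_vertices_E E U)"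
    by (rule cycle_space_eq_short_cycle_span[OF simple_graph_del_vertices[OF E] R k])
qed

section \<open>A root with few far vertices\<close>

definition lost_two_walks :: "nat \<Rightarrow> nat set set \<Rightarrow> nat set set \<Rightarrow> nat \<Rightarrow> real" where
  "lost_two_walks n E E' r =
    (\<Sum>u<n. \<Sum>y<n. edge_ind E r u * edge_ind E u y * of_bool ({r, u} \<notin> E' \<or> {u, y} \<notin> E'))"

lemma lost_two_walks_nonneg: "lost_two_walks n E E' r \<ge> 0"
  unfolding lost_two_walks_def by (intro sum_nonneg) simp

lemma sum_lost_two_walks_le:
  fixes E :: "nat set set"
  assumes E: "simple_graph {0..<n} E" and reg: "regular {0..<n} E d"
  shows "(\<Sum>r<n. lost_two_walks n E E' r) \<le> 4 * real d * real (card (E - E'))"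
proof -
  define M where "M = E - E'"
  have M: "simple_graph {0..<n} M" using simple_graph_subset[OF E] unfolding M_def by blast
  have deg: "(\<Sum>y<n. edge_ind E u y) = real d" if "u < n" for u
    using sum_edge_ind_eq_degree[OF E] reg that by (simp add: regular_def)
  have lost: "edge_ind E r u * edge_ind E u y * of_bool ({r, u} \<notin> E' \<or> {u, y} \<notin> E')
      \<le> edge_ind M r u * edge_ind E u y + edge_ind E r u * edge_ind M u y" for r u y
    unfolding M_def edge_ind_def by auto
  have first: "(\<Sum>r<n. \<Sum>u<n. \<Sum>y<n. edge_ind M r u * edge_ind E u y) = 2 * real (card M) * real d"
  proof -
    have "(\<Sum>r<n. \<Sum>u<n. \<Sum>y<n. edge_ind M r u * edge_ind E u y) = (\<Sum>r<n. \<Sum>u<n. edge_ind M r u) * real d"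
      by (simp add: deg flip: sum_distrib_left sum_distrib_right)
    then show ?thesis by (simp add: sum_edge_ind_eq_degree[OF M] sum_degree_eq_twice_card[OF M])
  qed
  have second: "(\<Sum>r<n. \<Sum>u<n. \<Sum>y<n. edge_ind E r u * edge_ind M u y) = 2 * real (card M) * real d"
  proof -
    have "(\<Sum>r<n. \<Sum>u<n. \<Sum>y<n. edge_ind E r u * edge_ind M u y)
        = (\<Sum>u<n. \<Sum>r<n. \<Sum>y<n. edge_ind E r u * edge_ind M u y)"
      by (rule sum.swap)
    also have "\<dots> = (\<Sum>u<n. (\<Sum>r<n. edge_ind E u r) * (\<Sum>y<n. edge_ind M u y))"
      by (simp add: sum_product edge_ind_commute)
    also have "\<dots> = (\<Sum>u<n. \<Sum>y<n. edge_ind M u y) * real d"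
      by (simp add: deg sum_distrib_left mult.commute)
    finally show ?thesis by (simp add: sum_edge_ind_eq_degree[OF M] sum_degree_eq_twice_card[OF M])
  qed
  have "(\<Sum>r<n. lost_two_walks n E E' r)
      \<le> (\<Sum>r<n. \<Sum>u<n. \<Sum>y<n. edge_ind M r u * edge_ind E u y + edge_ind E r u * edge_ind M u y)"
    unfolding lost_two_walks_def by (intro sum_mono lost)
  also have "\<dots> = 4 * real (card M) * real d"
    using first second by (simp add: sum.distrib)
  finally show ?thesis unfolding M_def by (simp add: mult.commute mult.left_commute)
qed

lemma sum_codegree_outside_ball2_le:
  "(\<Sum>y\<in>{..<n} - ball2 n E' r. codegree n E r y) \<le> lost_two_walks n E E' r"
proof -
  have "codegree n E r y
      = (\<Sum>u<n. edge_ind E r u * edge_ind E u y * of_bool ({r, u} \<notin> E' \<or> {u, y} \<notin> E'))"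
    if "y \<in> {..<n} - ball2 n E' r" for y
    using that unfolding codegree_def ball2_def within2_def by (intro sum.cong) auto
  then have "(\<Sum>y\<in>{..<n} - ball2 n E' r. codegree n E r y)
      = (\<Sum>y\<in>{..<n} - ball2 n E' r. \<Sum>u<n. edge_ind E r u * edge_ind E u y
          * of_bool ({r, u} \<notin> E' \<or> {u, y} \<notin> E'))"
    by (rule sum.cong[OF refl])
  also have "\<dots> \<le> (\<Sum>y<n. \<Sum>u<n. edge_ind E r u * edge_ind E u y
      * of_bool ({r, u} \<notin> E' \<or> {u, y} \<notin> E'))"
    by (rule sum_mono2) (auto intro!: sum_nonneg)
  also have "\<dots> = lost_two_walks n E E' r"
    unfolding lost_two_walks_def by (rule sum.swap)
  finally show ?thesis .
qed

lemma sum_codegree_deviation_sq: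
  fixes E :: "nat set set"
  assumes E: "simple_graph {0..<n} E" and reg: "regular {0..<n} E d" and u: "u < n" and n: "n > 0"
  shows "(\<Sum>v<n. (codegree n E u v - real d ^ 2 / real n) ^ 2)
    = (\<Sum>v<n. codegree n E u v ^ 2) - real d ^ 4 / real n"
proof -
  define a where "a = real d ^ 2 / real n"
  have "(\<Sum>v<n. (codegree n E u v - a) ^ 2)
      = (\<Sum>v<n. codegree n E u v ^ 2) - 2 * a * (\<Sum>v<n. codegree n E u v) + real n * a ^ 2"
    by (simp add: power2_diff sum.distrib sum_subtractf sum_distrib_left mult_ac)
  also have "\<dots> = (\<Sum>v<n. codegree n E u v ^ 2) - real d ^ 4 / real n"
    using n unfolding sum_codegree_eq_degree_sq[OF E reg u] a_def
    by (simp add: power2_eq_square field_simps eval_nat_numeral)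
  finally show ?thesis unfolding a_def .
qed

lemma card_far_vertices_le:
  fixes E E' :: "nat set set"
  assumes E: "simple_graph {0..<n} E" and reg: "regular {0..<n} E d" and r: "r < n" and n: "n > 0"
  shows "real (card ({..<n} - ball2 n E' r)) * real d ^ 2 \<le> real n * (lost_two_walks n E E' r
    + sqrt (real n * (\<Sum>v<n. (codegree n E r v - real d ^ 2 / real n) ^ 2)))"
proof -
  define Z where "Z = {..<n} - ball2 n E' r"
  define a where "a = real d ^ 2 / real n"
  define W where "W = (\<Sum>y\<in>Z. a - codegree n E r y)"
  have Z: "finite Z" "card Z \<le> n"
    unfolding Z_def by (simp, metis card_lessThan card_mono Diff_subset finite_lessThan)
  have sq: "(\<Sum>y\<in>Z. (a - codegree n E r y) ^ 2) \<le> (\<Sum>v<n. (codegree n E r v - a) ^ 2)"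
    unfolding Z_def power2_commute[of a] by (rule sum_mono2) auto
  have "W \<le> sqrt (W ^ 2)" by simp
  also have "W ^ 2 \<le> (\<Sum>y\<in>Z. (a - codegree n E r y) ^ 2) * card Z"
    unfolding W_def by (rule sum_squared_le_sum_of_squares)
  also have "\<dots> \<le> (\<Sum>v<n. (codegree n E r v - a) ^ 2) * real n"
    using Z sq by (intro mult_mono) (auto intro: sum_nonneg)
  finally have W: "W \<le> sqrt (real n * (\<Sum>v<n. (codegree n E r v - a) ^ 2))"
    by (simp add: mult.commute real_sqrt_le_mono)
  have "real (card Z) * a = (\<Sum>y\<in>Z. codegree n E r y) + W"
    unfolding W_def by (simp add: sum_subtractf)
  also have "\<dots> \<le> lost_two_walks n E E' r + sqrt (real n * (\<Sum>v<n. (codegree n E r v - a) ^ 2))"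
    using sum_codegree_outside_ball2_le W unfolding Z_def by (intro add_mono)
  finally show ?thesis
    using n unfolding Z_def a_def by (simp add: field_simps)
qed

lemma exists_le_twice_average:
  fixes f g :: "nat \<Rightarrow> real"
  assumes n: "n > 0" and P: "P > 0" and Q: "Q > 0"
    and f: "\<And>r. r < n \<Longrightarrow> f r \<ge> 0" and g: "\<And>r. r < n \<Longrightarrow> g r \<ge> 0"
    and sum_f: "(\<Sum>r<n. f r) \<le> real n * P" and sum_g: "(\<Sum>r<n. g r) \<le> real n * Q"
  shows "\<exists>r<n. f r \<le> 2 * P \<and> g r \<le> 2 * Q"
proof (rule ccontr)
  assume contra: "\<not> ?thesis"
  have "2 < f r / P + g r / Q" if "r < n" for r
  proof -
    have "2 * P < f r \<or> 2 * Q < g r" using contra that by (meson not_le)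
    then have "2 < f r / P \<or> 2 < g r / Q" using P Q by (simp add: less_divide_eq)
    moreover have "f r / P \<ge> 0" "g r / Q \<ge> 0" using f g that P Q by simp_all
    ultimately show ?thesis by linarith
  qed
  then have "(\<Sum>r<n. 2) < (\<Sum>r<n. f r / P + g r / Q)"
    using n by (intro sum_strict_mono) auto
  also have "\<dots> = (\<Sum>r<n. f r) / P + (\<Sum>r<n. g r) / Q"
    by (simp add: sum.distrib sum_divide_distrib)
  also have "\<dots> \<le> real n + real n"
    using sum_f sum_g P Q by (intro add_mono) (simp_all add: divide_le_eq)
  finally show False by simp
qed

lemma exists_root_few_far_vertices:
  fixes E E' :: "nat set set"
  assumes E: "simple_graph {0..<n} E" and reg: "regular {0..<n} E d" and n: "n > 0"
    and codeg: "(\<Sum>u<n. \<Sum>v<n. codegree n E u v ^ 2) \<le> real d ^ 4 + K" and K: "K \<ge> 0"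
  shows "\<exists>r<n. real (card ({0..<n} - ball2 n E' r)) * real d ^ 2
    \<le> 8 * real d * real (card (E - E')) + 2 * real n + real n * sqrt (2 * (K + real n))"
proof -
  define m where "m = real (card (E - E'))"
  define dev where "dev r = (\<Sum>v<n. (codegree n E r v - real d ^ 2 / real n) ^ 2)" for r
  define P where "P = 4 * real d * m / real n + 1"
  define Q where "Q = K / real n + 1"
  have P: "P > 0" unfolding P_def m_def using n by (intro add_nonneg_pos) auto
  have Q: "Q > 0" unfolding Q_def using n K by (intro add_nonneg_pos) auto
  have nP: "real n * P = 4 * real d * m + real n" and nQ: "real n * Q = K + real n"
    using n unfolding P_def Q_def by (simp_all add: field_simps)
  have "(\<Sum>r<n. lost_two_walks n E E' r) \<le> real n * P"
    using sum_lost_two_walks_le[OF E reg, of E'] unfolding nP m_def by simp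
  moreover have "(\<Sum>r<n. dev r) \<le> real n * Q"
  proof -
    have "(\<Sum>r<n. dev r) = (\<Sum>u<n. \<Sum>v<n. codegree n E u v ^ 2) - real d ^ 4"
      unfolding dev_def using n by (simp add: sum_codegree_deviation_sq[OF E reg] sum_subtractf)
    then show ?thesis using codeg unfolding nQ by simp
  qed
  ultimately obtain r where r: "r < n" "lost_two_walks n E E' r \<le> 2 * P" "dev r \<le> 2 * Q"
    using exists_le_twice_average[OF n P Q] lost_two_walks_nonneg unfolding dev_def
    by (metis (no_types, lifting) sum_nonneg zero_le_power2)
  have "sqrt (real n * dev r) \<le> sqrt (2 * (K + real n))"
  proof (rule real_sqrt_le_mono)
    have "real n * dev r \<le> real n * (2 * Q)" using r(3) by (simp add: mult_left_mono)
    then show "real n * dev r \<le> 2 * (K + real n)" using nQ by simp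
  qed
  then have "real (card ({..<n} - ball2 n E' r)) * real d ^ 2 \<le> real n * (2 * P + sqrt (2 * (K + real n)))"
    using card_far_vertices_le[OF E reg r(1) n, of E'] r(2) n unfolding dev_def
    by (smt (verit) mult_left_mono of_nat_0_le_iff)
  also have "\<dots> = 8 * real d * m + 2 * real n + real n * sqrt (2 * (K + real n))"
    using nP by (simp add: algebra_simps)
  finally show ?thesis using r(1) unfolding m_def by (auto simp: atLeast0LessThan)
qed

section \<open>Choosing the deleted sets\<close>

lemma deletion_fraction_le:
  fixes E E' :: "nat set set"
  assumes E: "simple_graph {0..<n} E" and reg: "regular {0..<n} E d" and sub: "E' \<subseteq> E"
    and n: "n > 0" and b: "0 < b" "b \<le> real d" and s: "s \<ge> 0"
    and U: "real (card U) * real d ^ 2 \<le> 8 * real d * real (card (E - E')) + 2 * real n + real n * s"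
  shows "real (card U) / real n \<le> 4 * (1 - real (card E') / real (card E)) + (2 + s) / b ^ 2"
proof -
  have d: "real d > 0" using b by linarith
  have card: "2 * real (card E) = real n * real d" by (rule card_edges_if_regular[OF E reg])
  have fin: "finite E'" using simple_graph_finite_edges[OF E] sub by (rule rev_finite_subset)
  have m: "real (card (E - E')) = real (card E) - real (card E')"
    using card_Diff_subset[OF fin sub] card_mono[OF simple_graph_finite_edges[OF E] sub]
    by (simp add: of_nat_diff)
  have "real n * real d > 0" using n d by simp
  then have "real (card E) > 0" using card by linarith
  moreover have "8 * real d * real (card (E - E')) / (real n * real d ^ 2)
      = 4 * real (card (E - E')) / real (card E)"
  proof -
    have "8 * real d * real (card (E - E')) / (real n * real d ^ 2)
        = 8 * real (card (E - E')) / (real n * real d)"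
      using d by (simp add: power2_eq_square)
    also have "\<dots> = 4 * real (card (E - E')) / real (card E)"
      unfolding card[symmetric] by simp
    finally show ?thesis .
  qed
  ultimately have "8 * real d * real (card (E - E')) / (real n * real d ^ 2)
      = 4 * (1 - real (card E') / real (card E))"
    unfolding m by (simp add: field_simps)
  moreover have "real (card U) / real n \<le> (8 * real d * real (card (E - E')) + 2 * real n + real n * s)
      / (real n * real d ^ 2)"
    using U n d by (simp add: field_simps)
  moreover have "(2 * real n + real n * s) / (real n * real d ^ 2) = (2 + s) / real d ^ 2"
    using n d by (simp add: field_simps)
  moreover have "(2 + s) / real d ^ 2 \<le> (2 + s) / b ^ 2"
    using s b by (intro frac_le power_mono) simp_all
  ultimately show ?thesis by (simp add: add_divide_distrib)
qed

lemma exists_deletion_set: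
  fixes E E' :: "nat set set" and b c :: real
  assumes E: "simple_graph {0..<n} E" and reg: "regular {0..<n} E d" and sub: "E' \<subseteq> E"
    and n: "n > 0"
  shows "\<exists>U \<subseteq> {0..<n}.
    connected_graph (del_vertices_V {0..<n} U) (del_vertices_E E' U) \<and>
    cycle_space (del_vertices_E E' U) = short_cycle_span 11 (del_vertices_E E' U) \<and>
    ((\<exists>lam\<in>#adj_eigenvalues n E. \<forall>\<mu>\<in>#adj_eigenvalues n E - {#lam#}. cmod \<mu> \<le> c) \<longrightarrow>
      0 < b \<longrightarrow> b \<le> real d \<longrightarrow> real (card U) / real n \<le> 4 * (1 - real (card E') / real (card E))
        + (2 + sqrt (2 * (real n * c ^ 4 + real n))) / b ^ 2)"
    (is "\<exists>U \<subseteq> {0..<n}. _ \<and> _ \<and> (?spectral \<longrightarrow> 0 < b \<longrightarrow> b \<le> real d \<longrightarrow> ?bound U)")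
proof -
  obtain r where r: "?spectral \<longrightarrow> 0 < b \<longrightarrow> b \<le> real d \<longrightarrow> ?bound ({0..<n} - ball2 n E' r)"
  proof (cases "?spectral \<and> 0 < b \<and> b \<le> real d")
    case True
    then obtain lam where "lam \<in># adj_eigenvalues n E"
      and "\<forall>\<mu>\<in>#adj_eigenvalues n E - {#lam#}. cmod \<mu> \<le> c" by blast
    then have "(\<Sum>u<n. \<Sum>v<n. codegree n E u v ^ 2) \<le> real d ^ 4 + real n * c ^ 4"
      using sum_codegree_sq_le[OF E reg] by blast
    then obtain r where far: "real (card ({0..<n} - ball2 n E' r)) * real d ^ 2
        \<le> 8 * real d * real (card (E - E')) + 2 * real n + real n * sqrt (2 * (real n * c ^ 4 + real n))"
      using exists_root_few_far_vertices[OF E reg n, of "real n * c ^ 4" E'] by (auto simp: zero_le_even_power)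
    then have "?bound ({0..<n} - ball2 n E' r)"
      using deletion_fraction_le[OF E reg sub n _ _ _ far] True by simp
    then show thesis by (intro that[of r] impI)
  qed (use that in blast)
  define U where "U = {0..<n} - ball2 n E' r"
  have "connected_graph (del_vertices_V {0..<n} U) (del_vertices_E E' U)"
    and "cycle_space (del_vertices_E E' U) = short_cycle_span 11 (del_vertices_E E' U)"
    using delete_outside_ball2[OF simple_graph_subset[OF E sub], of 11 r] unfolding U_def by simp_all
  then show ?thesis using r unfolding U_def[symmetric] by (intro exI[of _ U] conjI) (auto simp: U_def)
qed

lemma eventually_mem_along: "\<forall>\<^sub>F t in along T. t \<in> T"
  unfolding along_def by (simp add: eventually_inf_principal)

lemma tendsto_along_if_sequentially: "(f \<longlongrightarrow> l) sequentially \<Longrightarrow> (f \<longlongrightarrow> l) (along T)"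
  unfolding along_def by (rule tendsto_mono[OF inf_le1])

definition deletion_error :: "real \<Rightarrow> real \<Rightarrow> nat \<Rightarrow> real" where
  "deletion_error c1 C t =
    (2 + sqrt (2 * (real t * (C * real t powr (1/3)) ^ 4 + real t))) / (c1 * real t powr (2/3)) ^ 2"

lemma deletion_error_tendsto_zero:
  assumes c1: "c1 > 0"
  shows "(deletion_error c1 C \<longlongrightarrow> 0) sequentially"
proof -
  have "(C * y) ^ 4 = (\<bar>C\<bar> * y) ^ 4" for y :: real
    by (simp add: power_mult_distrib power_even_abs)
  moreover have "((\<lambda>x::real. (2 + sqrt (2 * (x * (\<bar>C\<bar> * x powr (1/3)) ^ 4 + x))) / (c1 * x powr (2/3)) ^ 2)
      \<longlongrightarrow> 0) at_top"
  proof (cases "C = 0")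
    case True
    then show ?thesis using c1 by simp real_asymp
  next
    case False
    then show ?thesis using c1 by real_asymp
  qed
  ultimately have "((\<lambda>x::real. (2 + sqrt (2 * (x * (C * x powr (1/3)) ^ 4 + x))) / (c1 * x powr (2/3)) ^ 2)
      \<longlongrightarrow> 0) at_top"
    by simp
  then show ?thesis
    unfolding deletion_error_def by (rule filterlim_compose[OF _ filterlim_real_sequentially])
qed

lemma exists_deletion_family:
  fixes H H' :: "nat \<Rightarrow> nat set set" and d :: "nat \<Rightarrow> nat"
  assumes graphs: "\<forall>t\<in>T. t > 0 \<and> simple_graph {0..<t} (H t) \<and> regular {0..<t} (H t) (d t) \<and> H' t \<subseteq> H t"
    and c1: "c1 > 0" and low: "\<forall>\<^sub>F t in along T. c1 * real t powr (2/3) \<le> real (d t)"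
    and spec: "\<forall>\<^sub>F t in along T. \<exists>lam\<in>#adj_eigenvalues t (H t).
      \<forall>\<mu>\<in>#adj_eigenvalues t (H t) - {#lam#}. cmod \<mu> \<le> C * real t powr (1/3)"
    and lim: "((\<lambda>t. real (card (H' t)) / real (card (H t))) \<longlongrightarrow> 1) (along T)"
  shows "\<exists>U. (\<forall>t\<in>T. U t \<subseteq> {0..<t} \<and>
      connected_graph (del_vertices_V {0..<t} (U t)) (del_vertices_E (H' t) (U t)) \<and>
      cycle_space (del_vertices_E (H' t) (U t)) = short_cycle_span 11 (del_vertices_E (H' t) (U t))) \<and>
    ((\<lambda>t. real (card (U t)) / real t) \<longlongrightarrow> 0) (along T)"
proof -
  define good :: "nat \<Rightarrow> nat set \<Rightarrow> bool" where "good t V \<longleftrightarrow> V \<subseteq> {0..<t} \<and>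
      connected_graph (del_vertices_V {0..<t} V) (del_vertices_E (H' t) V) \<and>
      cycle_space (del_vertices_E (H' t) V) = short_cycle_span 11 (del_vertices_E (H' t) V)" for t V
  define bound where "bound t = 4 * (1 - real (card (H' t)) / real (card (H t))) + deletion_error c1 C t" for t
  define small :: "nat \<Rightarrow> nat set \<Rightarrow> bool" where "small t V \<longleftrightarrow> (\<exists>lam\<in>#adj_eigenvalues t (H t).
      \<forall>\<mu>\<in>#adj_eigenvalues t (H t) - {#lam#}. cmod \<mu> \<le> C * real t powr (1/3)) \<longrightarrow>
    c1 * real t powr (2/3) \<le> real (d t) \<longrightarrow> real (card V) / real t \<le> bound t" for t V
  have "\<exists>V. good t V \<and> small t V" if "t \<in> T" for t
    using exists_deletion_set[where b = "c1 * real t powr (2/3)" and c = "C * real t powr (1/3)"]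
      graphs that c1 unfolding good_def small_def bound_def deletion_error_def by auto
  then obtain U where U: "\<forall>t\<in>T. good t (U t) \<and> small t (U t)" by (metis bchoice)
  have upper: "\<forall>\<^sub>F t in along T. real (card (U t)) / real t \<le> bound t"
    using eventually_mem_along low spec by eventually_elim (use U in \<open>auto simp: small_def\<close>)
  have "(bound \<longlongrightarrow> 4 * (1 - 1) + 0) (along T)"
    unfolding bound_def
    by (intro tendsto_intros lim tendsto_along_if_sequentially deletion_error_tendsto_zero c1)
  then have "((\<lambda>t. real (card (U t)) / real t) \<longlongrightarrow> 0) (along T)"
    by (intro tendsto_sandwich[OF always_eventually upper tendsto_const]) simp_all
  with U show ?thesis unfolding good_def by blast
qed

theorem proposition4p9:
  fixes T :: "nat set" and H :: "nat \<Rightarrow> nat set set" and d :: "nat \<Rightarrow> nat"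
  assumes T_inf: "infinite T" and T_pos: "\<forall>t\<in>T. t > 0"
    and H_graph: "\<forall>t\<in>T. simple_graph {0..<t} (H t) \<and> triangle_free (H t) \<and> regular {0..<t} (H t) (d t)"
    and d_Theta: "\<exists>c1 c2. c1 > 0 \<and> c2 > 0 \<and> (\<forall>\<^sub>F t in along T.
        c1 * real t powr (2/3) \<le> real (d t) \<and> real (d t) \<le> c2 * real t powr (2/3))"
    and eig: "\<exists>C. \<forall>\<^sub>F t in along T. \<exists>lam1\<in>#adj_eigenvalues t (H t).
        (\<forall>\<mu>\<in>#adj_eigenvalues t (H t). Re \<mu> \<le> Re lam1) \<and>
        (\<forall>\<mu>\<in>#(adj_eigenvalues t (H t) - {#lam1#}). cmod \<mu> \<le> C * real t powr (1/3))"
  shows "\<forall>H' :: nat \<Rightarrow> nat set set.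
     (\<forall>t\<in>T. H' t \<subseteq> H t) \<and>
     ((\<lambda>t. real (card (H' t)) / real (card (H t))) \<longlongrightarrow> 1) (along T)
     \<longrightarrow> (\<exists>U :: nat \<Rightarrow> nat set.
          (\<forall>t\<in>T. U t \<subseteq> {0..<t} \<and>
             connected_graph (del_vertices_V {0..<t} (U t)) (del_vertices_E (H' t) (U t)) \<and>
             cycle_space (del_vertices_E (H' t) (U t)) =
               short_cycle_span 11 (del_vertices_E (H' t) (U t))) \<and>
          ((\<lambda>t. real (card (U t)) / real t) \<longlongrightarrow> 0) (along T))"
proof (intro allI impI, elim conjE)
  fix H' :: "nat \<Rightarrow> nat set set"
  assume sub: "\<forall>t\<in>T. H' t \<subseteq> H t"
    and lim: "((\<lambda>t. real (card (H' t)) / real (card (H t))) \<longlongrightarrow> 1) (along T)"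
  from d_Theta obtain c1 c2 where c1: "c1 > 0" and "\<forall>\<^sub>F t in along T.
      c1 * real t powr (2/3) \<le> real (d t) \<and> real (d t) \<le> c2 * real t powr (2/3)" by blast
  then have low: "\<forall>\<^sub>F t in along T. c1 * real t powr (2/3) \<le> real (d t)"
    by (elim eventually_mono) simp
  from eig obtain C where "\<forall>\<^sub>F t in along T. \<exists>lam\<in>#adj_eigenvalues t (H t).
      (\<forall>\<mu>\<in>#adj_eigenvalues t (H t). Re \<mu> \<le> Re lam) \<and>
      (\<forall>\<mu>\<in>#adj_eigenvalues t (H t) - {#lam#}. cmod \<mu> \<le> C * real t powr (1/3))" by blast
  then have spec: "\<forall>\<^sub>F t in along T. \<exists>lam\<in>#adj_eigenvalues t (H t).
      \<forall>\<mu>\<in>#adj_eigenvalues t (H t) - {#lam#}. cmod \<mu> \<le> C * real t powr (1/3)"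
    by (elim eventually_mono) blast
  have graphs: "\<forall>t\<in>T. t > 0 \<and> simple_graph {0..<t} (H t) \<and> regular {0..<t} (H t) (d t) \<and> H' t \<subseteq> H t"
    using H_graph T_pos sub by blast
  show "\<exists>U. (\<forall>t\<in>T. U t \<subseteq> {0..<t} \<and>
      connected_graph (del_vertices_V {0..<t} (U t)) (del_vertices_E (H' t) (U t)) \<and>
      cycle_space (del_vertices_E (H' t) (U t)) = short_cycle_span 11 (del_vertices_E (H' t) (U t))) \<and>
      ((\<lambda>t. real (card (U t)) / real t) \<longlongrightarrow> 0) (along T)"
    by (rule exists_deletion_family[OF graphs c1 low spec lim])
qed

end
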